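(* Let $U\subseteq U'\subset\mathbb Z^2$ be two upward closed sets of grid points, i.e., $(x,y)\in U\Rightarrow(x,y+1)\in U$, and likewise for $U'$. Let $f$ denote one peeling step. Then $f(U)\subseteq f(U')$.
   Context: One peeling step applied to a set $U$ of points is $f(U)=U\setminus\{\text{vertices (extreme points) of }\mathrm{conv}(U)\}$. *)

theory Defs
  imports "HOL-Analysis.Analysis"
begin

definition grid_emb :: "int \<times> int \<Rightarrow> real \<times> real" where
  "grid_emb p = (real_of_int (fst p), real_of_int (snd p))"

definition upward_closed :: "(int \<times> int) set \<Rightarrow> bool" where
  "upward_closed U \<longleftrightarrow> (\<forall>x y. (x, y) \<in> U \<longrightarrow> (x, y + 1) \<in> U)"

definition peel :: "(int \<times> int) set \<Rightarrow> (int \<times> int) set" where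
  "peel U = {p \<in> U. \<not> (grid_emb p extreme_point_of (convex hull (grid_emb ` U)))}"

end

theory Submission
  imports Defs
begin

lemma extreme_point_of_subset:
  assumes "x extreme_point_of T" and "S \<subseteq> T" and "x \<in> S"
  shows "x extreme_point_of S"
  using assms unfolding extreme_point_of_def by blast

lemma peel_mono:
  assumes "U \<subseteq> U'"
  shows "peel U \<subseteq> peel U'"
proof
  fix p assume "p \<in> peel U"
  then have "p \<in> U" and not_extreme: "\<not> grid_emb p extreme_point_of convex hull (grid_emb ` U)"
    by (auto simp: peel_def)
  have "convex hull (grid_emb ` U) \<subseteq> convex hull (grid_emb ` U')"
    using assms by (intro hull_mono image_mono)
  moreover have "grid_emb p \<in> convex hull (grid_emb ` U)"
    using \<open>p \<in> U\<close> by (simp add: hull_inc)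
  ultimately have "\<not> grid_emb p extreme_point_of convex hull (grid_emb ` U')"
    using not_extreme extreme_point_of_subset by blast
  then show "p \<in> peel U'"
    using \<open>p \<in> U\<close> assms by (auto simp: peel_def)
qed

text \<open>Monotonicity holds for arbitrary sets of grid points.\<close>

theorem mainTheorem5:
  fixes U U' :: "(int \<times> int) set"
  assumes "U \<subseteq> U'"
    and "upward_closed U"
    and "upward_closed U'"
  shows "peel U \<subseteq> peel U'"
  using assms(1) by (rule peel_mono)

end
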